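(* For every $\varepsilon>0$ there exists a connected graph $G=(V,E)$ such that the generic submodularity ratio $\gamma$ of the set function $g:2^V\to\mathbb{R}_{\ge 0}$, $g(\emptyset)=0$, $g(S)=1/f(S)$ for $S\ne\emptyset$, satisfies $\gamma<\varepsilon$. (The same holds for any positive constant multiple of $g$.)
   Context: Graphs are finite, undirected, unweighted, without self-loops, connected; $f(S)=\sum_{u\in V}\min_{s\in S}\mathrm{dist}(u,s)$ is the group farness. For a set function $g$ on $2^U$, the marginal gain is $\Delta(e\mid A)=g(A\cup\{e\})-g(A)$. For a non-negative monotone set function $g$, its generic submodularity ratio $\gamma\in[0,1]$ is the largest scalar such that $\Delta(e\mid A)\ge\gamma\,\Delta(e\mid B)$ for all $A\subseteq B\subseteq U$ and all $e\in U\setminus B$; $\gamma=1$ iff $g$ is submodular. *)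

theory Defs
  imports Complex_Main
begin

definition simple_graph :: "'a set \<Rightarrow> ('a \<Rightarrow> 'a \<Rightarrow> bool) \<Rightarrow> bool" where
  "simple_graph V E \<longleftrightarrow> finite V \<and>
     (\<forall>u v. E u v \<longrightarrow> u \<in> V \<and> v \<in> V) \<and>
     (\<forall>u v. E u v \<longrightarrow> E v u) \<and> (\<forall>u. \<not> E u u)"

definition is_walk :: "'a set \<Rightarrow> ('a \<Rightarrow> 'a \<Rightarrow> bool) \<Rightarrow> 'a \<Rightarrow> 'a \<Rightarrow> nat \<Rightarrow> bool" where
  "is_walk V E u v n \<longleftrightarrow> (\<exists>xs. length xs = Suc n \<and> hd xs = u \<and> last xs = v \<and> set xs \<subseteq> V \<and>
      (\<forall>i < n. E (xs ! i) (xs ! Suc i)))"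

definition connected_graph :: "'a set \<Rightarrow> ('a \<Rightarrow> 'a \<Rightarrow> bool) \<Rightarrow> bool" where
  "connected_graph V E \<longleftrightarrow> V \<noteq> {} \<and> (\<forall>u\<in>V. \<forall>v\<in>V. \<exists>n. is_walk V E u v n)"

definition gdist :: "'a set \<Rightarrow> ('a \<Rightarrow> 'a \<Rightarrow> bool) \<Rightarrow> 'a \<Rightarrow> 'a \<Rightarrow> nat" where
  "gdist V E u v = (LEAST n. is_walk V E u v n)"

definition farness :: "'a set \<Rightarrow> ('a \<Rightarrow> 'a \<Rightarrow> bool) \<Rightarrow> 'a set \<Rightarrow> nat" where
  "farness V E S = (\<Sum>u\<in>V. Min ((\<lambda>s. gdist V E u s) ` S))"

definition gfun :: "'a set \<Rightarrow> ('a \<Rightarrow> 'a \<Rightarrow> bool) \<Rightarrow> 'a set \<Rightarrow> real" where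
  "gfun V E S = (if S = {} then 0 else 1 / real (farness V E S))"

text \<open>Pairs with B \<union> {e} = U are excluded, since f(U) = 0 and g(U) = 1/f(U) is undefined.\<close>

definition gen_sub_ratio :: "'a set \<Rightarrow> ('a set \<Rightarrow> real) \<Rightarrow> real" where
  "gen_sub_ratio U h = Sup {\<gamma>. 0 \<le> \<gamma> \<and> \<gamma> \<le> 1 \<and>
     (\<forall>A B e. A \<subseteq> B \<longrightarrow> B \<subseteq> U \<longrightarrow> e \<in> U - B \<longrightarrow> insert e B \<noteq> U \<longrightarrow>
        h (insert e A) - h A \<ge> \<gamma> * (h (insert e B) - h B))}"

end

theory Submission
  imports Defs
begin

text \<open>In the complete graph every vertex outside S has distance 1 to S, so f(S) = |V - S| and
  g(S) = 1/|V - S| is convex in |S|. Adding a vertex to the empty set gains 1/(n - 1), while adding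
  it to a set that leaves exactly two vertices uncovered gains 1 - 1/2. Hence the ratio is at most
  2/(n - 1), which tends to 0.\<close>

lemma is_walk_0_iff: "is_walk V E u v 0 \<longleftrightarrow> u = v \<and> u \<in> V"
  unfolding is_walk_def by (auto simp: length_Suc_conv)

lemma is_walk_edge:
  assumes "u \<in> V" "v \<in> V" "E u v"
  shows "is_walk V E u v 1"
  unfolding is_walk_def using assms by (intro exI[of _ "[u, v]"]) auto

lemma gdist_self: "u \<in> V \<Longrightarrow> gdist V E u u = 0"
  unfolding gdist_def by (simp add: is_walk_0_iff)

lemma gdist_edge:
  assumes "u \<in> V" "v \<in> V" "E u v" "u \<noteq> v"
  shows "gdist V E u v = 1"
  unfolding gdist_def
proof (rule Least_equality)
  show "is_walk V E u v 1" using assms(1-3) by (rule is_walk_edge)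
  show "1 \<le> n" if "is_walk V E u v n" for n
    using that \<open>u \<noteq> v\<close> by (cases n) (auto simp: is_walk_0_iff)
qed

definition complete_adj :: "'a set \<Rightarrow> 'a \<Rightarrow> 'a \<Rightarrow> bool" where
  "complete_adj V u v \<longleftrightarrow> u \<in> V \<and> v \<in> V \<and> u \<noteq> v"

lemma simple_graph_complete: "finite V \<Longrightarrow> simple_graph V (complete_adj V)"
  by (auto simp: simple_graph_def complete_adj_def)

lemma connected_graph_complete: "V \<noteq> {} \<Longrightarrow> connected_graph V (complete_adj V)"
  unfolding connected_graph_def
  by (metis is_walk_0_iff is_walk_edge complete_adj_def)

lemma gdist_complete: "u \<in> V \<Longrightarrow> v \<in> V \<Longrightarrow> gdist V (complete_adj V) u v = (if u = v then 0 else 1)"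
  by (simp add: gdist_self gdist_edge complete_adj_def)

lemma farness_complete:
  assumes "finite V" "S \<subseteq> V" "S \<noteq> {}"
  shows "farness V (complete_adj V) S = card (V - S)"
proof -
  have "Min ((\<lambda>s. gdist V (complete_adj V) u s) ` S) = (if u \<in> S then 0 else 1)" if "u \<in> V" for u
  proof (cases "u \<in> S")
    case True
    then have "0 \<in> (\<lambda>s. gdist V (complete_adj V) u s) ` S"
      using \<open>u \<in> V\<close> by (force simp: gdist_self)
    then show ?thesis
      using True \<open>finite V\<close> \<open>S \<subseteq> V\<close> by (simp add: Min_eqI finite_subset)
  next
    case False
    then have "(\<lambda>s. gdist V (complete_adj V) u s) ` S = {1}"
      using \<open>u \<in> V\<close> \<open>S \<subseteq> V\<close> \<open>S \<noteq> {}\<close> by (auto simp: gdist_complete subset_iff)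
    then show ?thesis
      using False by simp
  qed
  then have "farness V (complete_adj V) S = (\<Sum>u\<in>V. if u \<in> S then 0 else 1)"
    unfolding farness_def by (intro sum.cong) auto
  also have "\<dots> = card (V - S)"
    using \<open>finite V\<close> by (simp add: sum.If_cases Diff_eq)
  finally show ?thesis .
qed

lemma gfun_complete:
  assumes "finite V" "S \<subseteq> V" "S \<noteq> {}"
  shows "gfun V (complete_adj V) S = 1 / card (V - S)"
  using assms by (simp add: gfun_def farness_complete)

lemma gfun_complete_mono:
  assumes "finite V" "A \<subseteq> B" "B \<subset> V"
  shows "gfun V (complete_adj V) A \<le> gfun V (complete_adj V) B"
proof (cases "A = {}")
  case True
  then show ?thesis by (simp add: gfun_def)
next
  case False
  have "0 < card (V - B)" "card (V - B) \<le> card (V - A)"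
    using assms by (auto intro: card_mono simp: card_gt_0_iff)
  moreover have "B \<noteq> {}"
    using False \<open>A \<subseteq> B\<close> by auto
  ultimately show ?thesis
    using assms False by (simp add: gfun_complete frac_le)
qed

text \<open>In HOL g(U) = 1/f(U) = 1/0 = 0, so monotonicity can only be asked for below U;
  this suffices because the definition of the ratio excludes the case insert e B = U.\<close>

lemma gen_sub_ratio_le_marginal_quotient:
  assumes mono: "\<And>A B. A \<subseteq> B \<Longrightarrow> B \<subset> U \<Longrightarrow> h A \<le> h B"
    and "A \<subseteq> B" "B \<subseteq> U" "e \<in> U - B" "insert e B \<noteq> U"
    and gain: "h (insert e B) - h B > 0"
  shows "gen_sub_ratio U h \<le> (h (insert e A) - h A) / (h (insert e B) - h B)"
proof -
  let ?ratios = "{\<gamma>. 0 \<le> \<gamma> \<and> \<gamma> \<le> 1 \<and> (\<forall>A B e. A \<subseteq> B \<longrightarrow> B \<subseteq> U \<longrightarrow> e \<in> U - B \<longrightarrow>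
      insert e B \<noteq> U \<longrightarrow> \<gamma> * (h (insert e B) - h B) \<le> h (insert e A) - h A)}"
  have "h A' \<le> h (insert e' A')"
    if "A' \<subseteq> B'" "B' \<subseteq> U" "e' \<in> U - B'" "insert e' B' \<noteq> U" for A' B' e'
    using that by (intro mono) auto
  then have "?ratios \<noteq> {}"
    by (intro ex_in_conv[THEN iffD1] exI[of _ 0]) auto
  moreover have "\<gamma> \<le> (h (insert e A) - h A) / (h (insert e B) - h B)" if "\<gamma> \<in> ?ratios" for \<gamma>
  proof -
    have "\<gamma> * (h (insert e B) - h B) \<le> h (insert e A) - h A"
      using that assms(2-5) by blast
    then show ?thesis
      using gain by (simp add: pos_le_divide_eq)
  qed
  ultimately show ?thesis
    unfolding gen_sub_ratio_def by (rule cSup_least)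
qed

lemma gen_sub_ratio_complete_le:
  fixes c :: real
  assumes "finite V" "card V \<ge> 3" "c > 0"
  shows "gen_sub_ratio V (\<lambda>S. c * gfun V (complete_adj V) S) \<le> 2 / (real (card V) - 1)"
proof -
  let ?h = "\<lambda>S. c * gfun V (complete_adj V) S"
  obtain e f where ef: "e \<in> V" "f \<in> V" "e \<noteq> f"
    using \<open>finite V\<close> \<open>card V \<ge> 3\<close> card_le_Suc0_iff_eq[of V] by auto
  define B where "B = V - {e, f}"
  have "card B = card V - 2" "card (V - {e}) = card V - 1"
    using ef \<open>finite V\<close> by (simp_all add: B_def card_Diff_subset)
  then have "B \<noteq> {}"
    using \<open>card V \<ge> 3\<close> by auto
  have "V - insert e B = {f}" "V - B = {e, f}"
    using ef by (auto simp: B_def)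
  have gain_empty: "?h {e} - ?h {} = c / (real (card V) - 1)"
    using ef \<open>finite V\<close> \<open>card (V - {e}) = card V - 1\<close> \<open>card V \<ge> 3\<close>
    by (simp add: gfun_complete gfun_def[of _ _ "{}"] of_nat_diff)
  have gain_B: "?h (insert e B) - ?h B = c / 2"
    using ef \<open>finite V\<close> \<open>B \<noteq> {}\<close> \<open>V - insert e B = {f}\<close> \<open>V - B = {e, f}\<close>
    by (simp add: gfun_complete B_def)
  have "gen_sub_ratio V ?h \<le> (?h {e} - ?h {}) / (?h (insert e B) - ?h B)"
  proof (rule gen_sub_ratio_le_marginal_quotient)
    show "?h A \<le> ?h A'" if "A \<subseteq> A'" "A' \<subset> V" for A A'
      using gfun_complete_mono[OF \<open>finite V\<close> that] \<open>c > 0\<close> by simp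
    show "insert e B \<noteq> V"
      using \<open>V - insert e B = {f}\<close> by auto
    show "?h (insert e B) - ?h B > 0"
      unfolding gain_B using \<open>c > 0\<close> by simp
  qed (use ef in \<open>auto simp: B_def\<close>)
  also have "\<dots> = 2 / (real (card V) - 1)"
    unfolding gain_empty gain_B using \<open>c > 0\<close> by simp
  finally show ?thesis .
qed

theorem mainTheorem5:
  fixes \<epsilon> c :: real
  assumes "\<epsilon> > 0" and "c > 0"
  shows "\<exists>(V :: nat set) E. simple_graph V E \<and> connected_graph V E \<and>
           gen_sub_ratio V (\<lambda>S. c * gfun V E S) < \<epsilon>"
proof -
  obtain m :: nat where "2 / \<epsilon> < m"
    using reals_Archimedean2 by blast
  define V where "V = {0..<m + 3}"
  have "2 / (real (card V) - 1) < \<epsilon>"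
    using \<open>2 / \<epsilon> < m\<close> \<open>\<epsilon> > 0\<close> by (simp add: V_def field_simps)
  moreover have "gen_sub_ratio V (\<lambda>S. c * gfun V (complete_adj V) S) \<le> 2 / (real (card V) - 1)"
    using \<open>c > 0\<close> by (intro gen_sub_ratio_complete_le) (auto simp: V_def)
  moreover have "simple_graph V (complete_adj V)" "connected_graph V (complete_adj V)"
    by (auto simp: V_def intro: simple_graph_complete connected_graph_complete)
  ultimately show ?thesis
    by fastforce
qed

end
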